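(* Let $\varphi$ be the rational map of the Riemann sphere $\hat{\mathbb{C}}$ given by $$\varphi(z)=\frac{z(2+z)(1+z-z^2)}{(1+2z)(1-z-z^2)},$$ and let $\omega=e^{2\pi i/3}$. Then $\omega$ and $\omega^2$ are attracting fixed points of $\varphi$; for every $z\in\mathbb{C}$ with $\operatorname{Im}z>0$ one has $\varphi^{\circ n}(z)\to\omega$, and for every $z\in\mathbb{C}$ with $\operatorname{Im}z<0$ one has $\varphi^{\circ n}(z)\to\omega^2$ as $n\to\infty$. The extended real line $\mathbb{R}\cup\{\infty\}$ is forward and backward invariant under $\varphi$. *)

theory Defs
  imports "HOL-Analysis.Analysis"
begin

definition phi_num :: "complex \<Rightarrow> complex" where
  "phi_num z = z * (2 + z) * (1 + z - z^2)"

definition phi_den :: "complex \<Rightarrow> complex" where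
  "phi_den z = (1 + 2*z) * (1 - z - z^2)"

text \<open>The map on the finite plane (only used away from the poles).\<close>
definition phi :: "complex \<Rightarrow> complex" where
  "phi z = phi_num z / phi_den z"

text \<open>The Riemann sphere modelled as complex option, None being infinity.
  The extension of phi: poles go to infinity, and infinity goes to infinity
  (deg numerator 4 > deg denominator 3; numerator and denominator are coprime).\<close>
fun phi_hat :: "complex option \<Rightarrow> complex option" where
  "phi_hat None = None"
| "phi_hat (Some z) = (if phi_den z = 0 then None else Some (phi z))"

definition ext_real_line :: "complex option set" where
  "ext_real_line = insert None (Some ` \<real>)"

definition omega :: complex where
  "omega = cis (2 * pi / 3)"

end

theory Submission
  imports Defs "HOL-Complex_Analysis.Conformal_Mappings"
begin

text \<open>Since \<open>\<phi>\<close> has real coefficients and, by its partial fraction expansion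
  \<open>\<phi>(z) = z/2 - 1/4 - (3/20)/(2z+1) - (2/5)(2z+1)/(z\<^sup>2+z-1)\<close>, satisfies
  \<open>Im \<phi>(z) = Im z \<cdot> K(z)\<close> with \<open>K > 0\<close>, it maps each open half-plane into itself, and the
  extended real line is its own preimage. The roots \<open>\<omega>, \<omega>\<^sup>2\<close> of
  \<open>z\<^sup>2+z+1\<close> are fixed points with multiplier \<open>1/2\<close>. Conjugating \<open>\<phi>\<close> on the upper
  half-plane by the Cayley transform sending \<open>\<omega>\<close> to \<open>0\<close> gives a self-map of the unit
  disc fixing \<open>0\<close> with derivative \<open>1/2\<close>; by the Schwarz lemma it strictly decreases
  the modulus of every nonzero point, and a compactness argument then forces its
  orbits to converge to \<open>0\<close>. The lower half-plane follows by complex conjugation.\<close>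

lemma Im_inverse_cmod: "Im (inverse w) = - Im w / (cmod w)^2"
  by (simp add: cmod_power2)

lemma Im_divide_cnj: "Im (w / q) = Im (w * cnj q) / (cmod q)^2"
  by (simp add: Im_divide')

lemma Schwarz_Lemma_strict:
  assumes holf: "f holomorphic_on ball 0 1" and f0: "f 0 = 0"
    and into: "\<And>z. norm z < 1 \<Longrightarrow> norm (f z) < 1"
    and df: "norm (deriv f 0) < 1" and w: "w \<noteq> 0" "norm w < 1"
  shows "norm (f w) < norm w"
proof -
  have "norm (f w) \<noteq> norm w"
  proof
    assume "norm (f w) = norm w"
    then obtain \<alpha> where \<alpha>: "\<forall>z. norm z < 1 \<longrightarrow> f z = \<alpha> * z" "norm \<alpha> = 1"
      using Schwarz_Lemma(3)[OF holf f0 into w(2)] w by blast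
    have "deriv f 0 = deriv (\<lambda>z. \<alpha> * z) 0"
      by (rule complex_derivative_transform_within_open[OF holf _ open_ball])
        (use \<alpha> in \<open>auto intro: holomorphic_intros\<close>)
    with \<alpha>(2) df show False by simp
  qed
  with Schwarz_Lemma(1)[OF holf f0 into w(2)] show ?thesis by simp
qed

lemma iterates_tendsto_0_if_norm_decreasing:
  fixes f :: "'a::{real_normed_vector, heine_borel} \<Rightarrow> 'a"
  assumes cont: "continuous_on (ball 0 1) f"
    and decr: "\<And>w. w \<noteq> 0 \<Longrightarrow> norm w < 1 \<Longrightarrow> norm (f w) < norm w"
    and f0: "f 0 = 0" and w: "norm w < 1"
  shows "(\<lambda>n. (f^^n) w) \<longlonglongrightarrow> 0"
proof -
  have le: "norm (f u) \<le> norm u" if "norm u < 1" for u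
    using decr[of u] that f0 by (cases "u = 0") auto
  define r where "r n = norm ((f^^n) w)" for n
  have r_Suc: "r (Suc n) = norm (f ((f^^n) w))" for n by (simp add: r_def)
  have r_le: "r n \<le> norm w" for n
  proof (induction n)
    case (Suc n)
    then have "norm ((f^^n) w) < 1" using w by (simp add: r_def)
    then show ?case using le[of "(f^^n) w"] Suc by (simp add: r_Suc r_def)
  qed (simp add: r_def)
  have "decseq r"
  proof (rule decseq_SucI)
    fix n
    have "norm ((f^^n) w) < 1" using r_le[of n] w by (simp add: r_def)
    then show "r (Suc n) \<le> r n" using le[of "(f^^n) w"] by (simp add: r_Suc r_def)
  qed
  then obtain L where L: "r \<longlonglongrightarrow> L" "\<And>i. L \<le> r i"
    using decseq_convergent[of r 0] by (auto simp: r_def)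
  have "L = 0"
    \<comment> \<open>Otherwise the orbit stays in the compact annulus \<open>L \<le> norm u \<le> norm w\<close>, on which
      the decrement \<open>norm u - norm (f u)\<close> has a positive minimum.\<close>
  proof (rule ccontr)
    assume "L \<noteq> 0"
    moreover have "L \<ge> 0" using L(1) by (rule LIMSEQ_le_const) (simp add: r_def)
    ultimately have "L > 0" by simp
    define K :: "'a set" where "K = cball 0 (norm w) - ball 0 L"
    have iter_in_K: "(f^^n) w \<in> K" for n using r_le[of n] L(2)[of n] by (auto simp: K_def r_def)
    have K_sub: "K \<subseteq> ball 0 1" using w by (auto simp: K_def)
    have "compact K" unfolding K_def by (intro compact_diff) auto
    moreover have "K \<noteq> {}" using iter_in_K by blast
    moreover have "continuous_on K (\<lambda>u. norm u - norm (f u))"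
      using continuous_on_subset[OF cont K_sub] by (intro continuous_intros)
    ultimately have "\<exists>x\<in>K. \<forall>y\<in>K. norm x - norm (f x) \<le> norm y - norm (f y)"
      by (rule continuous_attains_inf)
    then obtain x where x: "x \<in> K" "\<And>y. y \<in> K \<Longrightarrow> norm x - norm (f x) \<le> norm y - norm (f y)"
      by blast
    have "x \<noteq> 0" "norm x < 1" using x(1) K_sub \<open>L > 0\<close> by (auto simp: K_def)
    then have gap: "norm x - norm (f x) > 0" using decr by simp
    have step: "norm x - norm (f x) \<le> r n - r (Suc n)" for n
      using x(2)[OF iter_in_K[of n]] by (simp add: r_Suc r_def)
    have "(\<lambda>n. r n - r (Suc n)) \<longlonglongrightarrow> L - L"
      by (intro tendsto_diff L(1) LIMSEQ_Suc)
    then have "eventually (\<lambda>n. r n - r (Suc n) < norm x - norm (f x)) sequentially"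
      using gap by (intro order_tendstoD(2)) auto
    with step show False
      by (auto simp: eventually_sequentially not_less[symmetric])
  qed
  with L(1) show ?thesis
    by (simp add: r_def[abs_def] tendsto_norm_zero_iff)
qed

definition cayley :: "complex \<Rightarrow> complex \<Rightarrow> complex" where
  "cayley a z = (z - a) / (z - cnj a)"

definition cayley_inv :: "complex \<Rightarrow> complex \<Rightarrow> complex" where
  "cayley_inv a w = (a - cnj a * w) / (1 - w)"

lemma norm_cayley_less_1:
  assumes "Im a > 0" "Im z > 0"
  shows "norm (cayley a z) < 1"
proof -
  have "norm (z - a) < norm (z - cnj a)"
    using assms mult_pos_pos[OF assms]
    by (simp add: cmod_def power2_eq_square algebra_simps)
  then show ?thesis by (simp add: cayley_def norm_divide divide_less_eq)
qed

lemma Im_cayley_inv_pos: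
  assumes a: "Im a > 0" and w: "norm w < 1"
  shows "Im (cayley_inv a w) > 0"
proof -
  have "Im ((a - cnj a * w) * cnj (1 - w)) = Im a * (1 - (norm w)^2)"
    unfolding cmod_power2 by (simp add: power2_eq_square algebra_simps)
  moreover have "(norm w)^2 < 1" using w by (simp add: power_less_one_iff abs_square_less_1)
  moreover have "w \<noteq> 1" using w by auto
  ultimately show ?thesis
    using a unfolding cayley_inv_def Im_divide_cnj by simp
qed

lemma cayley_inv_cayley:
  assumes "Im a > 0" "Im z > 0"
  shows "cayley_inv a (cayley a z) = z"
proof -
  have nz: "z - cnj a \<noteq> 0" and na: "a - cnj a \<noteq> 0" using assms by (auto simp: complex_eq_iff)
  have "1 - cayley a z = (a - cnj a) / (z - cnj a)"
    using nz by (simp add: cayley_def field_simps)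
  moreover have "a - cnj a * cayley a z = z * (a - cnj a) / (z - cnj a)"
    using nz by (simp add: cayley_def field_simps)
  ultimately show ?thesis using nz na by (simp add: cayley_inv_def)
qed

lemma cayley_self: "Im a > 0 \<Longrightarrow> cayley a a = 0"
  by (simp add: cayley_def)

lemma cayley_inv_0: "cayley_inv a 0 = a"
  by (simp add: cayley_inv_def)

lemma cayley_conjugate_has_derivative:
  assumes a: "Im a > 0" and fa: "f a = a" and df: "(f has_field_derivative d) (at a)"
  shows "((\<lambda>w. cayley a (f (cayley_inv a w))) has_field_derivative d) (at 0)"
proof -
  have na: "a - cnj a \<noteq> 0" using a by (auto simp: complex_eq_iff)
  have dinv: "(cayley_inv a has_field_derivative a - cnj a) (at 0)"
    unfolding cayley_inv_def[abs_def] by (auto intro!: derivative_eq_intros)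
  have dcay: "(cayley a has_field_derivative 1 / (a - cnj a)) (at (f (cayley_inv a 0)))"
  proof -
    have "((\<lambda>z. (z - a) / (z - cnj a)) has_field_derivative
        (1 * (a - cnj a) - (a - a) * 1) / ((a - cnj a) * (a - cnj a))) (at a)"
      using na by (auto intro!: derivative_eq_intros)
    then show ?thesis using na by (simp add: cayley_def[abs_def] fa cayley_inv_0)
  qed
  have "(f has_field_derivative d) (at (cayley_inv a 0))"
    using df by (simp add: cayley_inv_0)
  from DERIV_chain'[OF DERIV_chain'[OF dinv this] dcay] show ?thesis
    using na by simp
qed

lemma iterates_tendsto_attracting_fixpoint_upper_half_plane:
  assumes holf: "f holomorphic_on {z. Im z > 0}"
    and maps: "\<And>z. Im z > 0 \<Longrightarrow> Im (f z) > 0"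
    and a: "Im a > 0" and fa: "f a = a" and df: "norm (deriv f a) < 1"
    and z: "Im z > 0"
  shows "(\<lambda>n. (f^^n) z) \<longlonglongrightarrow> a"
proof -
  define g where "g w = cayley a (f (cayley_inv a w))" for w
  have "cayley a holomorphic_on {z. Im z > 0}"
    unfolding cayley_def[abs_def] using a by (intro holomorphic_intros) (auto simp: complex_eq_iff)
  then have hol_outer: "(cayley a \<circ> f) holomorphic_on {z. Im z > 0}"
    using holomorphic_on_compose_gen[OF holf] maps by auto
  have "cayley_inv a holomorphic_on ball 0 1"
    unfolding cayley_inv_def[abs_def] by (intro holomorphic_intros) auto
  moreover have "cayley_inv a ` ball 0 1 \<subseteq> {z. Im z > 0}"
    using Im_cayley_inv_pos[OF a] by auto
  ultimately have "(cayley a \<circ> f \<circ> cayley_inv a) holomorphic_on ball 0 1"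
    using holomorphic_on_compose_gen[OF _ hol_outer] by blast
  then have hol_g: "g holomorphic_on ball 0 1"
    by (simp add: g_def[abs_def] o_def)
  have g0: "g 0 = 0" by (simp add: g_def cayley_inv_0 fa cayley_self a)
  have g_ball: "norm (g w) < 1" if "norm w < 1" for w
    using norm_cayley_less_1[OF a] maps Im_cayley_inv_pos[OF a that] by (simp add: g_def)
  have "(f has_field_derivative deriv f a) (at a)"
    using holomorphic_derivI[OF holf open_halfspace_Im_gt] a by simp
  then have "deriv g 0 = deriv f a"
    unfolding g_def[abs_def] by (intro DERIV_imp_deriv cayley_conjugate_has_derivative a fa)
  then have g_decr: "norm (g w) < norm w" if "w \<noteq> 0" "norm w < 1" for w
    using Schwarz_Lemma_strict[OF hol_g g0 g_ball] df that by simp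
  have g_iter: "(\<lambda>n. (g^^n) (cayley a z)) \<longlonglongrightarrow> 0"
    using holomorphic_on_imp_continuous_on[OF hol_g] g_decr g0 norm_cayley_less_1[OF a z]
    by (rule iterates_tendsto_0_if_norm_decreasing)
  have "Im ((f^^n) z) > 0 \<and> (g^^n) (cayley a z) = cayley a ((f^^n) z)" for n
    by (induction n) (use z maps cayley_inv_cayley[OF a] in \<open>auto simp: g_def\<close>)
  then have "(f^^n) z = cayley_inv a ((g^^n) (cayley a z))" for n
    using cayley_inv_cayley[OF a] by metis
  moreover have "isCont (cayley_inv a) 0"
    unfolding cayley_inv_def[abs_def] by (intro continuous_intros) auto
  ultimately show ?thesis
    using isCont_tendsto_compose[OF _ g_iter, of "cayley_inv a"] by (simp add: cayley_inv_0)
qed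

lemma phi_num_expand: "phi_num z = - (z^4) - z^3 + 3*z^2 + 2*z"
  by (simp add: phi_num_def algebra_simps power2_eq_square power3_eq_cube power4_eq_xxxx)

lemma phi_den_expand: "phi_den z = - 2*z^3 - 3*z^2 + z + 1"
  by (simp add: phi_den_def algebra_simps power2_eq_square power3_eq_cube)

lemma phi_den_factor: "phi_den z = - ((2*z + 1) * (z^2 + z - 1))"
  unfolding phi_den_def by (simp add: algebra_simps power2_eq_square)

lemma Im_eq_0_if_phi_den_eq_0:
  assumes "phi_den z = 0"
  shows "Im z = 0"
proof -
  have "2*z + 1 = 0 \<or> z^2 + z - 1 = 0" using assms by (simp add: phi_den_factor)
  moreover have "(2*z + 1)^2 = (of_real (sqrt 5))^2" if "z^2 + z - 1 = 0"
    using that by (simp flip: of_real_power) algebra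
  ultimately have "2*z + 1 = 0 \<or> 2*z + 1 = of_real (sqrt 5) \<or> 2*z + 1 = - of_real (sqrt 5)"
    using power2_eq_iff by blast
  then show ?thesis by (auto simp: complex_eq_iff)
qed

lemma phi_partial_fractions:
  assumes "phi_den z \<noteq> 0"
  shows "phi z = z/2 - 1/4 - 3/20 * inverse (2*z+1) - 2/5 * ((2*z+1) / (z^2+z-1))"
    (is "_ = ?r")
proof -
  define a b where "a = 2*z+1" and "b = z^2+z-1"
  have ab: "a \<noteq> 0" "b \<noteq> 0" using assms by (auto simp: phi_den_factor a_def b_def)
  have "(z/2 - 1/4 - 3/20 * inverse a - 2/5 * (a/b)) * (a*b) = (z/2 - 1/4)*a*b - 3/20*b - 2/5*a*a"
    using ab by (simp add: field_simps)
  also have "\<dots> = - phi_num z"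
    unfolding a_def b_def phi_num_def by (simp add: field_simps power2_eq_square power3_eq_cube power4_eq_xxxx)
  finally have "phi_num z = ?r * phi_den z"
    by (simp add: phi_den_factor a_def b_def)
  then show ?thesis
    using assms unfolding phi_def by simp
qed

definition phi_Im_factor :: "complex \<Rightarrow> real" where
  "phi_Im_factor z = 1/2 + 3/10 / (cmod (2*z+1))^2
     + 2/5 * (2 * (cmod z)^2 + 2 * Re z + 3) / (cmod (z^2+z-1))^2"

lemma Im_phi:
  assumes "phi_den z \<noteq> 0"
  shows "Im (phi z) = Im z * phi_Im_factor z"
proof -
  have Im_combination: "Im (z/2 - 1/4 - 3/20 * u - 2/5 * v) = Im z/2 - 3/20 * Im u - 2/5 * Im v" for u v
    by simp
  have "Im ((2*z+1) * cnj (z^2+z-1)) = - Im z * (2 * (cmod z)^2 + 2 * Re z + 3)"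
    unfolding cmod_power2 by (simp add: power2_eq_square algebra_simps)
  then have Im_quotient: "Im ((2*z+1) / (z^2+z-1))
      = - Im z * (2 * (cmod z)^2 + 2 * Re z + 3) / (cmod (z^2+z-1))^2"
    by (simp only: Im_divide_cnj)
  have Im_reciprocal: "Im (inverse (2*z+1)) = - 2 * Im z / (cmod (2*z+1))^2"
    by (simp only: Im_inverse_cmod) simp
  \<comment> \<open>Stated over abstract reals so that the simplifier leaves the norms alone.\<close>
  have collect: "y/2 - 3/20 * (- 2 * y / A) - 2/5 * (- y * E / B) = y * (1/2 + 3/10 / A + 2/5 * E / B)"
    for y A E B :: real
    by (simp add: algebra_simps)
  show ?thesis
    unfolding phi_partial_fractions[OF assms] Im_combination Im_quotient Im_reciprocal phi_Im_factor_def
    by (rule collect)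
qed

lemma phi_Im_factor_pos: "phi_Im_factor z > 0"
proof -
  have "2 * (cmod z)^2 + 2 * Re z + 3 = (cmod (2*z+1))^2 / 2 + 5/2"
    unfolding cmod_power2 by (simp add: power2_eq_square field_simps)
  then show ?thesis
    unfolding phi_Im_factor_def by (simp add: add_pos_nonneg)
qed

lemma Im_phi_eq_0_iff: "phi_den z \<noteq> 0 \<Longrightarrow> Im (phi z) = 0 \<longleftrightarrow> Im z = 0"
  using phi_Im_factor_pos[of z] by (simp add: Im_phi)

lemma Im_phi_pos:
  assumes "Im z > 0"
  shows "Im (phi z) > 0"
proof -
  have "phi_den z \<noteq> 0" using assms Im_eq_0_if_phi_den_eq_0 by force
  then show ?thesis using assms phi_Im_factor_pos[of z] by (simp add: Im_phi)
qed

lemma phi_holomorphic_on_upper_half_plane: "phi holomorphic_on {z. Im z > 0}"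
proof -
  have "(\<lambda>z. phi_num z / phi_den z) holomorphic_on {z. Im z > 0}"
    unfolding phi_num_def phi_den_def using Im_eq_0_if_phi_den_eq_0
    by (intro holomorphic_intros) (auto simp: phi_den_def)
  then show ?thesis by (simp add: phi_def[abs_def])
qed

lemma phi_cnj: "phi (cnj z) = cnj (phi z)"
  by (simp add: phi_def phi_num_def phi_den_def)

lemma funpow_phi_cnj: "(phi^^n) (cnj z) = cnj ((phi^^n) z)"
  by (induction n) (simp_all add: phi_cnj)

lemma phi_hat_in_ext_real_line_iff: "phi_hat x \<in> ext_real_line \<longleftrightarrow> x \<in> ext_real_line"
proof (cases x)
  case (Some z)
  have "Some w \<in> ext_real_line \<longleftrightarrow> Im w = 0" for w
    by (auto simp: ext_real_line_def complex_is_Real_iff)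
  then show ?thesis
    using Some Im_eq_0_if_phi_den_eq_0[of z] Im_phi_eq_0_iff[of z]
    by (auto simp: ext_real_line_def)
qed (simp add: ext_real_line_def)

lemma phi_fixed_point_at_root:
  assumes r: "r^2 + r + 1 = 0"
  shows "phi_den r \<noteq> 0" "phi r = r" "(phi has_field_derivative 1/2) (at r)"
proof -
  have num: "phi_num r = - 2*r - 4" using r unfolding phi_num_expand by algebra
  have den: "phi_den r = 4*r + 2" using r unfolding phi_den_expand by algebra
  have den_sq: "(4*r + 2) * (4*r + 2) = -12" using r by algebra
  then have den_nz: "phi_den r \<noteq> 0" using den by auto
  then show "phi_den r \<noteq> 0" .
  have "r * (4*r + 2) = - 2*r - 4" using r by algebra
  then show "phi r = r" using den_nz by (simp add: phi_def num den field_simps)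
  have dnum: "(phi_num has_field_derivative - 4*r^3 - 3*r^2 + 6*r + 2) (at r)"
    unfolding phi_num_expand[abs_def] by (auto intro!: derivative_eq_intros)
  have dden: "(phi_den has_field_derivative - 6*r^2 - 6*r + 1) (at r)"
    unfolding phi_den_expand[abs_def] by (auto intro!: derivative_eq_intros)
  have dnum_val: "- 4*r^3 - 3*r^2 + 6*r + 2 = 9*r + 1" and dden_val: "- 6*r^2 - 6*r + 1 = 7"
    using r by algebra+
  have "((\<lambda>z. phi_num z / phi_den z) has_field_derivative
      ((9*r + 1) * (4*r + 2) - (- 2*r - 4) * 7) / ((4*r + 2) * (4*r + 2))) (at r)"
    using DERIV_divide[OF dnum dden den_nz] by (simp only: num den dnum_val dden_val)
  moreover have "(9*r + 1) * (4*r + 2) - (- 2*r - 4) * 7 = -6"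
    using r by algebra
  ultimately have "((\<lambda>z. phi_num z / phi_den z) has_field_derivative -6 / -12) (at r)"
    by (simp only: den_sq)
  then show "(phi has_field_derivative 1/2) (at r)"
    by (simp add: phi_def[abs_def])
qed

lemma omega_eq: "omega = Complex (-1/2) (sqrt 3 / 2)"
  unfolding omega_def by (simp add: complex_eq_iff cos_120 sin_120)

lemma Im_omega_pos: "Im omega > 0"
  by (simp add: omega_eq)

lemma cnj_omega: "cnj omega = omega^2"
  by (simp add: omega_eq complex_eq_iff power2_eq_square)

lemma omega_root: "omega^2 + omega + 1 = 0"
  by (simp add: omega_eq complex_eq_iff power2_eq_square)

lemma omega_squared_root: "(omega^2)^2 + omega^2 + 1 = 0"
  using omega_root by algebra

theorem lemma3p7:
  shows "phi omega = omega \<and> phi_den omega \<noteq> 0 \<and> cmod (deriv phi omega) < 1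
       \<and> phi (omega^2) = omega^2 \<and> phi_den (omega^2) \<noteq> 0 \<and> cmod (deriv phi (omega^2)) < 1
       \<and> (\<forall>z. Im z > 0 \<longrightarrow> (\<lambda>n. (phi ^^ n) z) \<longlonglongrightarrow> omega)
       \<and> (\<forall>z. Im z < 0 \<longrightarrow> (\<lambda>n. (phi ^^ n) z) \<longlonglongrightarrow> omega^2)
       \<and> phi_hat ` ext_real_line \<subseteq> ext_real_line
       \<and> phi_hat -` ext_real_line \<subseteq> ext_real_line"
proof -
  note fix1 = phi_fixed_point_at_root[OF omega_root]
  note fix2 = phi_fixed_point_at_root[OF omega_squared_root]
  have deriv1: "deriv phi omega = 1/2" and deriv2: "deriv phi (omega^2) = 1/2"
    using DERIV_imp_deriv fix1(3) fix2(3) by blast+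
  have upper: "(\<lambda>n. (phi^^n) z) \<longlonglongrightarrow> omega" if "Im z > 0" for z
    using iterates_tendsto_attracting_fixpoint_upper_half_plane[OF
        phi_holomorphic_on_upper_half_plane Im_phi_pos Im_omega_pos fix1(2)] deriv1 that
    by simp
  have lower: "(\<lambda>n. (phi^^n) z) \<longlonglongrightarrow> omega^2" if "Im z < 0" for z
  proof -
    have "(\<lambda>n. cnj ((phi^^n) (cnj z))) \<longlonglongrightarrow> cnj omega"
      using that by (intro tendsto_cnj upper) simp
    then show ?thesis by (simp add: funpow_phi_cnj cnj_omega)
  qed
  show ?thesis
    using fix1 fix2 upper lower by (auto simp: deriv1 deriv2 phi_hat_in_ext_real_line_iff)
qed

end
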